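(* Let $\lambda\ge1$ and let $(b_j)_{j=1}^\infty$ be an infinite $\lambda$-triangular sequence in a Banach space $X$. Then for every $\varepsilon>0$, $(b_j)$ has a $\big(\frac{\lambda^2+1}{2}+\varepsilon\big)$-wide-$(s)$ subsequence.
   Context: Given $\lambda\ge1$, a finite or infinite sequence $(b_j)$ in a Banach space $X$ is $\lambda$-triangular if there is a sequence $(f_j)$ in $X^*$ with $f_i(b_j)=1$ for all $j\ge i$, $f_i(b_j)=0$ for all $j<i$, and $\|f_j\|\le\lambda$, $\|b_j\|\le\lambda$ for all $j$. A sequence $(b_j)$ is $\mu$-basic if $\|\sum_{j=1}^k c_jb_j\|\le\mu\|\sum_j c_jb_j\|$ for all $k$ and scalars $(c_j)$ with $\sum_jc_jb_j$ convergent. For $\lambda\ge1$, a sequence $(b_j)$ is $\lambda$-wide-$(s)$ if (a) it is $2\lambda$-basic; (b) $\|b_j\|\le\lambda$ for all $j$; (c) $|\sum_{j=k}^n c_j|\le\lambda\|\sum_{j=1}^n c_jb_j\|$ for all $1\le k\le n$ (within the length of the sequence) and scalars $c_1,\dots,c_n$. *)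

theory Defs
  imports "HOL-Analysis.Analysis"
begin

definition triangular :: "real \<Rightarrow> (nat \<Rightarrow> 'a::banach) \<Rightarrow> bool" where
  "triangular lam b \<longleftrightarrow>
     (\<exists>f :: nat \<Rightarrow> 'a \<Rightarrow> real.
        (\<forall>i. bounded_linear (f i) \<and> onorm (f i) \<le> lam) \<and>
        (\<forall>i j. j \<ge> i \<longrightarrow> f i (b j) = 1) \<and>
        (\<forall>i j. j < i \<longrightarrow> f i (b j) = 0)) \<and>
     (\<forall>j. norm (b j) \<le> lam)"

definition basic :: "real \<Rightarrow> (nat \<Rightarrow> 'a::banach) \<Rightarrow> bool" where
  "basic mu b \<longleftrightarrow>
     (\<forall>c :: nat \<Rightarrow> real. summable (\<lambda>j. c j *\<^sub>R b j) \<longrightarrow>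
        (\<forall>k. norm (\<Sum>j\<le>k. c j *\<^sub>R b j) \<le> mu * norm (\<Sum>j. c j *\<^sub>R b j)))"

definition wide_s :: "real \<Rightarrow> (nat \<Rightarrow> 'a::banach) \<Rightarrow> bool" where
  "wide_s lam b \<longleftrightarrow>
     basic (2 * lam) b \<and>
     (\<forall>j. norm (b j) \<le> lam) \<and>
     (\<forall>(c :: nat \<Rightarrow> real) k n. k \<le> n \<longrightarrow>
        \<bar>\<Sum>j=k..n. c j\<bar> \<le> lam * norm (\<Sum>j\<le>n. c j *\<^sub>R b j))"

end

theory Submission
  imports Defs
begin

(*
  For a vector V let phi_V be a functional of norm at most 1 on span {V, b 0, b 1, ...} with
  phi_V V = norm V; it is built by extending one coordinate at a time (Hahn-Banach), and
  |phi_V (b i)| <= lam.  If the head S_k = sum_{j<=k} c_j b_(r j) of a normalised combination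
  S_n is close to V, then norm V + sum_{k<j<=n} c_j phi_V (b_(r j)) <= norm (V + S_n - S_k),
  which is about 1.  By Abel summation the sum on the left is (sum_{k<j<=n} c_j) phi_V (b_(r (k+1)))
  up to the increments of j |-> phi_V (b_(r j)), and the first term is at most lam * lam by
  triangularity.  So norm S_k <= 1 + lam^2 + O(delta), provided the increments are summably small.
  That is arranged by a diagonal argument: V only needs to range over a finite grid approximating
  span {b 0, ..., b p} with p = r k, so at each stage finitely many bounded sequences have to be
  tamed, which is done by pigeonholing.  The remaining conditions of wide-(s) hold for every subsequence
  of a triangular sequence, because lam <= (lam^2 + 1) / 2.
*)

lemma triangular_comp_strict_mono:
  assumes "triangular lam b" and "strict_mono r"
  shows "triangular lam (b \<circ> r)"
proof -
  obtain f :: "nat \<Rightarrow> 'a \<Rightarrow> real" where f: "\<forall>i. bounded_linear (f i) \<and> onorm (f i) \<le> lam"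
    and f1: "\<forall>i j. j \<ge> i \<longrightarrow> f i (b j) = 1" and f0: "\<forall>i j. j < i \<longrightarrow> f i (b j) = 0"
    using assms(1) unfolding triangular_def by blast
  have "\<forall>i j. j \<ge> i \<longrightarrow> f (r i) (b (r j)) = 1"
    using f1 strict_mono_less_eq[OF assms(2)] by blast
  moreover have "\<forall>i j. j < i \<longrightarrow> f (r i) (b (r j)) = 0"
    using f0 strict_mono_less[OF assms(2)] by blast
  ultimately show ?thesis
    using f assms(1) unfolding triangular_def by (intro conjI exI[of _ "f \<circ> r"]) simp_all
qed

lemma triangular_ge_one:
  assumes "triangular lam b"
  shows "lam \<ge> 1"
proof -
  obtain f :: "nat \<Rightarrow> 'a \<Rightarrow> real" where f: "bounded_linear (f 0)" "onorm (f 0) \<le> lam" "f 0 (b 0) = 1"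
    using assms unfolding triangular_def by blast
  have "1 \<le> onorm (f 0) * norm (b 0)"
    using onorm[OF f(1), of "b 0"] f(3) by simp
  also have "\<dots> \<le> lam * lam"
    using assms f onorm_pos_le[OF f(1)] unfolding triangular_def by (intro mult_mono) auto
  finally have "1 \<le> lam * lam" .
  moreover have "lam \<ge> 0" using onorm_pos_le[OF f(1)] f(2) by linarith
  ultimately show ?thesis
    by (cases "lam < 1") (use mult_strict_mono[of lam 1 lam 1] in auto)
qed

lemma triangular_tail_sum_le:
  assumes "triangular lam b" and "i \<le> n"
  shows "\<bar>\<Sum>j=i..n. c j\<bar> \<le> lam * norm (\<Sum>j\<le>n. c j *\<^sub>R b j)"
proof -
  obtain f :: "nat \<Rightarrow> 'a \<Rightarrow> real" where f: "\<forall>i. bounded_linear (f i) \<and> onorm (f i) \<le> lam"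
    and f1: "\<forall>i j. j \<ge> i \<longrightarrow> f i (b j) = 1" and f0: "\<forall>i j. j < i \<longrightarrow> f i (b j) = 0"
    using assms(1) unfolding triangular_def by blast
  have lin: "bounded_linear (f i)" using f by blast
  have "f i (\<Sum>j\<le>n. c j *\<^sub>R b j) = (\<Sum>j\<le>n. c j * f i (b j))"
    by (simp add: linear_sum[OF bounded_linear.linear[OF lin]] linear_simps(5)[OF lin])
  also have "\<dots> = (\<Sum>j\<le>n. if i \<le> j then c j else 0)"
    using f0 f1 by (intro sum.cong) (auto simp: not_le)
  also have "\<dots> = (\<Sum>j\<in>{j\<in>{..n}. i \<le> j}. c j)"
    by (rule sum.inter_filter[symmetric]) simp
  also have "{j\<in>{..n}. i \<le> j} = {i..n}" by auto
  finally have "\<bar>\<Sum>j=i..n. c j\<bar> = norm (f i (\<Sum>j\<le>n. c j *\<^sub>R b j))" by simp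
  also have "\<dots> \<le> onorm (f i) * norm (\<Sum>j\<le>n. c j *\<^sub>R b j)"
    by (rule onorm[OF lin])
  also have "\<dots> \<le> lam * norm (\<Sum>j\<le>n. c j *\<^sub>R b j)"
    using f by (simp add: mult_right_mono)
  finally show ?thesis .
qed

lemma triangular_coeff_le:
  assumes "triangular lam b" and "j \<le> n"
  shows "\<bar>c j\<bar> \<le> 2 * lam * norm (\<Sum>j\<le>n. c j *\<^sub>R b j)"
proof (cases "j < n")
  case True
  have "c j = (\<Sum>i=j..n. c i) - (\<Sum>i=Suc j..n. c i)"
    using assms(2) by (simp add: sum.atLeast_Suc_atMost)
  then show ?thesis
    using triangular_tail_sum_le[OF assms(1), of j n c]
      triangular_tail_sum_le[OF assms(1), of "Suc j" n c] True assms(2)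
    by linarith
next
  case False
  then have "c j = (\<Sum>i=j..n. c i)" using assms(2) by simp
  then show ?thesis
    using triangular_tail_sum_le[OF assms, of c] triangular_ge_one[OF assms(1)]
      mult_right_mono[of lam "2 * lam" "norm (\<Sum>j\<le>n. c j *\<^sub>R b j)"]
    by simp
qed

(* The numbers a 0, ..., a (N - 1) are the values at y 0, ..., y (N - 1) of a linear functional
   of norm at most 1 on their span (which is well defined precisely because of the inequality). *)
definition norm_dominated :: "(nat \<Rightarrow> 'a::real_normed_vector) \<Rightarrow> nat \<Rightarrow> (nat \<Rightarrow> real) \<Rightarrow> bool" where
  "norm_dominated y N a \<longleftrightarrow> (\<forall>c. (\<Sum>j<N. c j * a j) \<le> norm (\<Sum>j<N. c j *\<^sub>R y j))"

lemma norm_dominated_cong: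
  assumes "\<And>j. j < N \<Longrightarrow> a j = a' j"
  shows "norm_dominated y N a \<longleftrightarrow> norm_dominated y N a'"
proof -
  have "(\<Sum>j<N. c j * a j) = (\<Sum>j<N. c j * a' j)" for c
    using assms by (intro sum.cong) auto
  then show ?thesis unfolding norm_dominated_def by simp
qed

lemma norm_dominated_Suc:
  fixes y :: "nat \<Rightarrow> 'a::real_normed_vector" and N :: nat and a :: "nat \<Rightarrow> real"
  defines "\<phi> c \<equiv> \<Sum>j<N. c j * a j" and "V c \<equiv> \<Sum>j<N. c j *\<^sub>R y j"
  assumes dom: "norm_dominated y N a"
    and lower: "\<And>c. \<phi> c - norm (V c - y N) \<le> v"
    and upper: "\<And>c. v \<le> norm (V c + y N) - \<phi> c"
  shows "norm_dominated y (Suc N) (a(N := v))"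
  unfolding norm_dominated_def
proof
  fix c
  have scale: "\<phi> (\<lambda>j. c j / t) = \<phi> c / t" "V (\<lambda>j. c j / t) = (1 / t) *\<^sub>R V c" for t
    unfolding \<phi>_def V_def by (simp_all add: sum_divide_distrib scaleR_sum_right)
  consider "c N = 0" | "c N > 0" | "c N < 0" by linarith
  then have "\<phi> c + c N * v \<le> norm (V c + c N *\<^sub>R y N)"
  proof cases
    case 1
    then show ?thesis using dom by (simp add: norm_dominated_def \<phi>_def V_def)
  next
    case 2
    have "(1 / c N) *\<^sub>R V c + y N = (1 / c N) *\<^sub>R (V c + c N *\<^sub>R y N)"
      using 2 by (simp add: scaleR_add_right)
    then have "v \<le> norm (V c + c N *\<^sub>R y N) / c N - \<phi> c / c N"
      using upper[of "\<lambda>j. c j / c N"] 2 by (simp add: scale)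
    then show ?thesis using 2 by (simp add: field_simps)
  next
    case 3
    define t where "t = - c N"
    have "t > 0" using 3 by (simp add: t_def)
    have "(1 / t) *\<^sub>R V c - y N = (1 / t) *\<^sub>R (V c + c N *\<^sub>R y N)"
      using \<open>t > 0\<close> by (simp add: t_def scaleR_add_right)
    then have "\<phi> c / t - norm (V c + c N *\<^sub>R y N) / t \<le> v"
      using lower[of "\<lambda>j. c j / t"] \<open>t > 0\<close> by (simp add: scale)
    then show ?thesis using \<open>t > 0\<close> by (simp add: field_simps t_def)
  qed
  then show "(\<Sum>j<Suc N. c j * (a(N := v)) j) \<le> norm (\<Sum>j<Suc N. c j *\<^sub>R y j)"
    by (simp add: \<phi>_def V_def)
qed

lemma norm_dominated_extend:
  fixes y :: "nat \<Rightarrow> 'a::real_normed_vector"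
  assumes dom: "norm_dominated y N a"
  shows "\<exists>v. norm_dominated y (Suc N) (a(N := v))"
proof -
  define \<phi> where "\<phi> c = (\<Sum>j<N. c j * a j)" for c
  define V where "V c = (\<Sum>j<N. c j *\<^sub>R y j)" for c
  have gap: "\<phi> c - norm (V c - y N) \<le> norm (V d + y N) - \<phi> d" for c d
  proof -
    have "\<phi> c + \<phi> d \<le> norm (V c + V d)"
      using dom[unfolded norm_dominated_def, rule_format, of "\<lambda>j. c j + d j"]
      by (simp add: \<phi>_def V_def distrib_right scaleR_add_left sum.distrib)
    also have "\<dots> \<le> norm (V c - y N) + norm (V d + y N)"
      using norm_triangle_ineq[of "V c - y N" "V d + y N"] by simp
    finally show ?thesis by simp
  qed
  define v where "v = (SUP c. \<phi> c - norm (V c - y N))"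
  have "bdd_above (range (\<lambda>c. \<phi> c - norm (V c - y N)))"
    using gap[of _ "\<lambda>_. 0"] by (intro bdd_aboveI) blast
  then have "\<phi> c - norm (V c - y N) \<le> v" "v \<le> norm (V c + y N) - \<phi> c" for c
    unfolding v_def by (auto intro: cSUP_upper cSUP_least gap)
  then show ?thesis
    using norm_dominated_Suc[OF dom] unfolding \<phi>_def V_def by blast
qed

lemma norm_dominated_sequence:
  fixes y :: "nat \<Rightarrow> 'a::real_normed_vector"
  obtains a where "a 0 = norm (y 0)" and "\<And>N. norm_dominated y N a"
proof -
  define P where "P n a \<longleftrightarrow> norm_dominated y (Suc n) a \<and> a 0 = norm (y 0)" for n a
  have "\<exists>A. \<forall>n. P n (A n) \<and> (\<forall>j\<le>n. A (Suc n) j = A n j)"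
  proof (rule dependent_nat_choice)
    show "\<exists>a. P 0 a"
      by (rule exI[of _ "\<lambda>_. norm (y 0)"])
        (simp add: P_def norm_dominated_def mult_right_mono[OF abs_ge_self norm_ge_zero])
  next
    fix a n
    assume "P n a"
    then obtain v where "norm_dominated y (Suc (Suc n)) (a(Suc n := v))"
      using norm_dominated_extend unfolding P_def by blast
    then show "\<exists>a'. P (Suc n) a' \<and> (\<forall>j\<le>n. a' j = a j)"
      using \<open>P n a\<close> by (intro exI[of _ "a(Suc n := v)"]) (simp add: P_def)
  qed
  then obtain A where A: "\<And>n. P n (A n)" and stable: "\<And>n j. j \<le> n \<Longrightarrow> A (Suc n) j = A n j"
    by blast
  have A_diag: "A n j = A j j" if "j \<le> n" for n j
    using that by (induction n rule: dec_induct) (simp_all add: stable)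
  have "norm_dominated y N (\<lambda>j. A j j)" for N
  proof (cases N)
    case 0
    then show ?thesis by (simp add: norm_dominated_def)
  next
    case (Suc n)
    have "A j j = A n j" if "j < N" for j
      using A_diag[of j n] that by (simp add: Suc)
    then have "norm_dominated y N (\<lambda>j. A j j) \<longleftrightarrow> norm_dominated y N (A n)"
      by (rule norm_dominated_cong)
    then show ?thesis using A[of n] by (simp add: P_def Suc)
  qed
  moreover have "A 0 0 = norm (y 0)" using A[of 0] by (simp add: P_def)
  ultimately show ?thesis using that[of "\<lambda>j. A j j"] by blast
qed

lemma norm_dominated_sum:
  fixes y :: "nat \<Rightarrow> 'a::real_normed_vector" and \<iota> :: "'i \<Rightarrow> nat"
  assumes dom: "\<And>N. norm_dominated y N a" and "finite J"
  shows "(\<Sum>j\<in>J. w j * a (\<iota> j)) \<le> norm (\<Sum>j\<in>J. w j *\<^sub>R y (\<iota> j))"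
proof -
  define N where "N = Suc (Max (insert 0 (\<iota> ` J)))"
  have J: "\<iota> ` J \<subseteq> {..<N}"
    using \<open>finite J\<close> unfolding N_def by (auto simp: less_Suc_eq_le)
  define e where "e i = (\<Sum>j\<in>{j\<in>J. \<iota> j = i}. w j)" for i
  have "(\<Sum>i<N. e i * a i) = (\<Sum>i<N. \<Sum>j\<in>{j\<in>J. \<iota> j = i}. w j * a (\<iota> j))"
    unfolding e_def sum_distrib_right by (rule sum.cong) auto
  also have "\<dots> = (\<Sum>j\<in>J. w j * a (\<iota> j))"
    by (rule sum.group[OF \<open>finite J\<close> _ J]) simp
  finally have "(\<Sum>j\<in>J. w j * a (\<iota> j)) = (\<Sum>i<N. e i * a i)" ..
  also have "\<dots> \<le> norm (\<Sum>i<N. e i *\<^sub>R y i)"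
    using dom[of N] unfolding norm_dominated_def by blast
  also have "(\<Sum>i<N. e i *\<^sub>R y i) = (\<Sum>i<N. \<Sum>j\<in>{j\<in>J. \<iota> j = i}. w j *\<^sub>R y (\<iota> j))"
    unfolding e_def scaleR_sum_left by (rule sum.cong) auto
  also have "\<dots> = (\<Sum>j\<in>J. w j *\<^sub>R y (\<iota> j))"
    by (rule sum.group[OF \<open>finite J\<close> _ J]) simp
  finally show ?thesis .
qed

(* The numbers alpha i are the values phi (b i) of a functional phi of norm at most 1 on
   span {v, b 0, b 1, ...} with phi v = norm v. *)
definition norming_values :: "(nat \<Rightarrow> 'a::real_normed_vector) \<Rightarrow> 'a \<Rightarrow> (nat \<Rightarrow> real) \<Rightarrow> bool" where
  "norming_values b v \<alpha> \<longleftrightarrow> (\<forall>s (J :: nat set) w \<iota>. finite J \<longrightarrow>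
     s * norm v + (\<Sum>j\<in>J. w j * \<alpha> (\<iota> j)) \<le> norm (s *\<^sub>R v + (\<Sum>j\<in>J. w j *\<^sub>R b (\<iota> j))))"

lemma norming_valuesD:
  fixes J :: "nat set"
  assumes "norming_values b v \<alpha>" and "finite J"
  shows "s * norm v + (\<Sum>j\<in>J. w j * \<alpha> (\<iota> j)) \<le> norm (s *\<^sub>R v + (\<Sum>j\<in>J. w j *\<^sub>R b (\<iota> j)))"
  using assms(1)[unfolded norming_values_def, rule_format, OF assms(2)] .

lemma exists_norming_values: "\<exists>\<alpha>. norming_values b v \<alpha>"
proof -
  define y where "y = case_nat v b"
  obtain a where a0: "a 0 = norm (y 0)" and dom: "\<And>N. norm_dominated y N a"
    using norm_dominated_sequence by blast
  have "norming_values b v (\<lambda>i. a (Suc i))"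
    unfolding norming_values_def
  proof (intro allI impI)
    fix s :: real and J :: "nat set" and w :: "nat \<Rightarrow> real" and \<iota> :: "nat \<Rightarrow> nat"
    assume "finite J"
    define J' where "J' = insert None (Some ` J)"
    define w' where "w' = case_option s w"
    define \<iota>' where "\<iota>' = case_option 0 (\<lambda>j. Suc (\<iota> j))"
    have "(\<Sum>j\<in>J'. w' j * a (\<iota>' j)) \<le> norm (\<Sum>j\<in>J'. w' j *\<^sub>R y (\<iota>' j))"
      using \<open>finite J\<close> by (intro norm_dominated_sum[OF dom]) (simp add: J'_def)
    then show "s * norm v + (\<Sum>j\<in>J. w j * a (Suc (\<iota> j))) \<le> norm (s *\<^sub>R v + (\<Sum>j\<in>J. w j *\<^sub>R b (\<iota> j)))"
      using \<open>finite J\<close> a0 by (simp add: J'_def w'_def \<iota>'_def y_def sum.reindex)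
  qed
  then show ?thesis by blast
qed

lemma norming_values_abs_le:
  assumes "norming_values b v \<alpha>"
  shows "\<bar>\<alpha> i\<bar> \<le> norm (b i)"
  using norming_valuesD[OF assms, of "{i}" 0 "\<lambda>_. 1" id]
    norming_valuesD[OF assms, of "{i}" 0 "\<lambda>_. -1" id]
  by simp

lemma norming_values_comp:
  assumes "norming_values b v \<alpha>"
  shows "norming_values (b \<circ> r) v (\<alpha> \<circ> r)"
  unfolding norming_values_def comp_def
  by (intro allI impI) (rule norming_valuesD[OF assms])

lemma infinite_subset_small_oscillation:
  fixes H :: "('b \<Rightarrow> real) set"
  assumes "infinite A" and "finite H" and bnd: "\<And>\<alpha> x. \<alpha> \<in> H \<Longrightarrow> \<bar>\<alpha> x\<bar> \<le> B" and "\<theta> > 0"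
  obtains A' where "A' \<subseteq> A" and "infinite A'"
    and "\<And>\<alpha> x y. \<alpha> \<in> H \<Longrightarrow> x \<in> A' \<Longrightarrow> y \<in> A' \<Longrightarrow> \<bar>\<alpha> x - \<alpha> y\<bar> \<le> \<theta>"
proof -
  define q where "q x = restrict (\<lambda>\<alpha>. \<lfloor>\<alpha> x / \<theta>\<rfloor>) H" for x
  have "\<lfloor>- B / \<theta>\<rfloor> \<le> \<lfloor>\<alpha> x / \<theta>\<rfloor> \<and> \<lfloor>\<alpha> x / \<theta>\<rfloor> \<le> \<lfloor>B / \<theta>\<rfloor>" if "\<alpha> \<in> H" for \<alpha> x
    using bnd[OF that, of x] \<open>\<theta> > 0\<close>
    by (intro conjI floor_mono) (simp_all add: divide_right_mono abs_le_iff field_simps)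
  then have "q ` A \<subseteq> H \<rightarrow>\<^sub>E {\<lfloor>- B / \<theta>\<rfloor>..\<lfloor>B / \<theta>\<rfloor>}"
    by (auto simp: q_def)
  then have "finite (q ` A)"
    using \<open>finite H\<close> by (rule finite_subset[OF _ finite_PiE]) simp
  then obtain z where z: "infinite (q -` {z} \<inter> A)"
    using inf_img_fin_dom'[OF _ \<open>infinite A\<close>] by blast
  have "\<bar>\<alpha> x - \<alpha> y\<bar> \<le> \<theta>" if "\<alpha> \<in> H" "x \<in> q -` {z} \<inter> A" "y \<in> q -` {z} \<inter> A" for \<alpha> x y
  proof -
    have "\<lfloor>\<alpha> x / \<theta>\<rfloor> = \<lfloor>\<alpha> y / \<theta>\<rfloor>"
      using that by (metis (mono_tags) IntD1 q_def restrict_apply' singleton_iff vimageE)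
    then have "\<bar>\<alpha> x / \<theta> - \<alpha> y / \<theta>\<bar> < 1" by linarith
    then show ?thesis using \<open>\<theta> > 0\<close> by (simp add: diff_divide_distrib[symmetric])
  qed
  then show ?thesis using that[of "q -` {z} \<inter> A"] z by blast
qed

lemma exists_subsequence_small_increments:
  fixes F :: "nat \<Rightarrow> (nat \<Rightarrow> real) set" and \<theta> :: "nat \<Rightarrow> real"
  assumes fin: "\<And>p. finite (F p)" and bnd: "\<And>p \<alpha> i. \<alpha> \<in> F p \<Longrightarrow> \<bar>\<alpha> i\<bar> \<le> B"
    and pos: "\<And>i. \<theta> i > 0"
  obtains r where "strict_mono r"
    and "\<And>k i \<alpha>. k < i \<Longrightarrow> \<alpha> \<in> F (r k) \<Longrightarrow> \<bar>\<alpha> (r (Suc i)) - \<alpha> (r i)\<bar> \<le> \<theta> i"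
proof -
  \<comment> \<open>State \<open>(p, A, H)\<close>: the index chosen last, an infinite reservoir for the later indices,
    and the finitely many sequences whose oscillation on the reservoir must be at most \<open>\<theta> m\<close>.\<close>
  define P where "P m = (\<lambda>(p, A, H). p \<in> A \<and> infinite A \<and> finite H \<and> H \<subseteq> \<Union> (range F) \<and>
      (\<forall>\<alpha>\<in>H. \<forall>x\<in>A. \<forall>y\<in>A. \<bar>\<alpha> x - \<alpha> y\<bar> \<le> \<theta> m))" for m
  define Q where "Q = (\<lambda>(p :: nat, A, H) (p' :: nat, A', H'). A' \<subseteq> A \<inter> {p<..} \<and> H' = H \<union> F p)"
  have "\<exists>s. \<forall>m. P m (s m) \<and> Q (s m) (s (Suc m))"
  proof (rule dependent_nat_choice)
    show "\<exists>s. P 0 s" by (rule exI[of _ "(0, UNIV, {})"]) (simp add: P_def)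
  next
    fix s m
    assume "P m s"
    obtain p A H where s: "s = (p, A, H)" by (cases s)
    have "A \<inter> {p<..} = A - {..p}" by auto
    then have "infinite (A \<inter> {p<..})"
      using \<open>P m s\<close> by (simp add: s P_def Diff_infinite_finite)
    moreover have "finite (H \<union> F p)" using \<open>P m s\<close> fin by (simp add: s P_def)
    moreover have "\<bar>\<alpha> i\<bar> \<le> B" if "\<alpha> \<in> H \<union> F p" for \<alpha> i
      using \<open>P m s\<close> that bnd by (auto simp: s P_def)
    ultimately obtain A' where A': "A' \<subseteq> A \<inter> {p<..}" "infinite A'"
      "\<And>\<alpha> x y. \<alpha> \<in> H \<union> F p \<Longrightarrow> x \<in> A' \<Longrightarrow> y \<in> A' \<Longrightarrow> \<bar>\<alpha> x - \<alpha> y\<bar> \<le> \<theta> (Suc m)"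
      using infinite_subset_small_oscillation[OF _ _ _ pos] by metis
    then obtain p' where "p' \<in> A'" by (metis finite.emptyI ex_in_conv)
    then show "\<exists>s'. P (Suc m) s' \<and> Q s s'"
      using A' \<open>P m s\<close> fin by (intro exI[of _ "(p', A', H \<union> F p)"]) (auto simp: s P_def Q_def)
  qed
  then obtain s where s: "\<And>m. P m (s m) \<and> Q (s m) (s (Suc m))" by blast
  define r where "r m = fst (s m)" for m
  define A where "A m = fst (snd (s m))" for m
  define H where "H m = snd (snd (s m))" for m
  have s_eq: "s m = (r m, A m, H m)" for m by (simp add: r_def A_def H_def)
  have r_in: "r m \<in> A m"
    and osc: "\<And>\<alpha> x y. \<alpha> \<in> H m \<Longrightarrow> x \<in> A m \<Longrightarrow> y \<in> A m \<Longrightarrow> \<bar>\<alpha> x - \<alpha> y\<bar> \<le> \<theta> m"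
    and A_Suc: "A (Suc m) \<subseteq> A m \<inter> {r m<..}" and H_Suc: "H (Suc m) = H m \<union> F (r m)" for m
    using s[of m] unfolding s_eq[of m] s_eq[of "Suc m"] by (auto simp: P_def Q_def)
  have "strict_mono r"
    unfolding strict_mono_Suc_iff using r_in A_Suc by blast
  moreover have "\<bar>\<alpha> (r (Suc i)) - \<alpha> (r i)\<bar> \<le> \<theta> i" if "k < i" "\<alpha> \<in> F (r k)" for k i \<alpha>
  proof (rule osc)
    show "\<alpha> \<in> H i"
      using lift_Suc_mono_le[of H "Suc k" i] H_Suc that by auto
    show "r (Suc i) \<in> A i" using r_in[of "Suc i"] A_Suc[of i] by blast
  qed (fact r_in)
  ultimately show ?thesis using that by blast
qed

lemma abs_sum_mult_diff_le:
  fixes u v \<theta> :: "nat \<Rightarrow> real"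
  assumes "a \<le> n"
    and increments: "\<And>i. a \<le> i \<Longrightarrow> i < n \<Longrightarrow> \<bar>v (Suc i) - v i\<bar> \<le> \<theta> i"
    and tails: "\<And>i. a < i \<Longrightarrow> i \<le> n \<Longrightarrow> \<bar>\<Sum>j=i..n. u j\<bar> \<le> L"
  shows "\<bar>\<Sum>j=a..n. u j * (v j - v a)\<bar> \<le> L * (\<Sum>i=a..<n. \<theta> i)"
  using \<open>a \<le> n\<close>
proof (induction a rule: inc_induct)
  case base
  then show ?case by simp
next
  case (step i)
  have "(\<Sum>j=i..n. u j * (v j - v i))
      = (\<Sum>j=Suc i..n. u j * (v j - v (Suc i))) + (v (Suc i) - v i) * (\<Sum>j=Suc i..n. u j)"
    using step.hyps by (simp add: sum.atLeast_Suc_atMost sum_distrib_left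
        sum.distrib[symmetric] algebra_simps)
  moreover have "\<bar>(v (Suc i) - v i) * (\<Sum>j=Suc i..n. u j)\<bar> \<le> \<theta> i * L"
    unfolding abs_mult using increments[of i] tails[of "Suc i"] step.hyps
    by (intro mult_mono) auto
  moreover have "(\<Sum>k=i..<n. \<theta> k) = \<theta> i + (\<Sum>k=Suc i..<n. \<theta> k)"
    using step.hyps by (simp add: sum.atLeast_Suc_lessThan)
  ultimately show ?case
    using step.IH by (simp add: algebra_simps)
qed

definition grid :: "(nat \<Rightarrow> 'a::real_normed_vector) \<Rightarrow> real \<Rightarrow> int \<Rightarrow> nat \<Rightarrow> 'a set" where
  "grid x \<eta> K p = (\<lambda>z. \<Sum>i\<le>p. (\<eta> * of_int (z i)) *\<^sub>R x i) ` ({..p} \<rightarrow>\<^sub>E {-K..K})"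

lemma finite_grid: "finite (grid x \<eta> K p)"
  by (simp add: grid_def finite_PiE)

lemma grid_approximation:
  fixes x :: "nat \<Rightarrow> 'a::real_normed_vector"
  assumes "\<eta> > 0" and coeff: "\<And>i. i \<le> p \<Longrightarrow> \<bar>d i\<bar> \<le> \<eta> * K"
    and norm_x: "\<And>i. norm (x i) \<le> M"
  obtains V where "V \<in> grid x \<eta> K p" and "norm ((\<Sum>i\<le>p. d i *\<^sub>R x i) - V) \<le> (real p + 1) * \<eta> * M"
proof -
  define z where "z = restrict (\<lambda>i. \<lfloor>d i / \<eta>\<rfloor>) {..p}"
  have "-K \<le> \<lfloor>d i / \<eta>\<rfloor> \<and> \<lfloor>d i / \<eta>\<rfloor> \<le> K" if "i \<le> p" for i
  proof -
    have "- (of_int K * \<eta>) \<le> d i" "d i \<le> of_int K * \<eta>"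
      using coeff[OF that] by (simp_all add: abs_le_iff mult.commute[of \<eta>])
    then have "- of_int K \<le> d i / \<eta>" "d i / \<eta> \<le> of_int K"
      using \<open>\<eta> > 0\<close> by (simp_all add: pos_le_divide_eq pos_divide_le_eq)
    then show ?thesis by (simp add: le_floor_iff floor_le_iff)
  qed
  then have "z \<in> {..p} \<rightarrow>\<^sub>E {-K..K}" by (simp add: z_def)
  then have V: "(\<Sum>i\<le>p. (\<eta> * of_int (z i)) *\<^sub>R x i) \<in> grid x \<eta> K p"
    unfolding grid_def by (rule imageI)
  have err: "norm ((d i - \<eta> * of_int (z i)) *\<^sub>R x i) \<le> \<eta> * M" if "i \<le> p" for i
  proof -
    have "\<eta> * of_int \<lfloor>d i / \<eta>\<rfloor> \<le> d i" "d i < \<eta> * of_int \<lfloor>d i / \<eta>\<rfloor> + \<eta>"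
      using \<open>\<eta> > 0\<close> mult_left_mono[OF of_int_floor_le[of "d i / \<eta>"], of \<eta>]
        mult_strict_left_mono[OF real_of_int_floor_add_one_gt[of "d i / \<eta>"] \<open>\<eta> > 0\<close>]
      by (simp_all add: distrib_left)
    then have "\<bar>d i - \<eta> * of_int (z i)\<bar> \<le> \<eta>" using that by (simp add: z_def)
    then have "\<bar>d i - \<eta> * of_int (z i)\<bar> * norm (x i) \<le> \<eta> * M"
      using norm_x[of i] \<open>\<eta> > 0\<close> by (intro mult_mono) auto
    then show ?thesis by simp
  qed
  have "norm (\<Sum>i\<le>p. (d i - \<eta> * of_int (z i)) *\<^sub>R x i) \<le> (\<Sum>i\<le>p. \<eta> * M)"
    using err by (intro sum_norm_le) simp
  then have "norm ((\<Sum>i\<le>p. d i *\<^sub>R x i) - (\<Sum>i\<le>p. (\<eta> * of_int (z i)) *\<^sub>R x i)) \<le> (real p + 1) * \<eta> * M"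
    by (simp add: sum_subtractf scaleR_diff_left algebra_simps)
  then show ?thesis by (rule that[OF V])
qed

lemma strict_mono_sum_as_prefix_sum:
  fixes r :: "nat \<Rightarrow> nat" and x :: "nat \<Rightarrow> 'a::real_vector"
  assumes "strict_mono r"
  obtains d where "\<And>i. d i \<in> insert 0 (c ` {..k})"
    and "(\<Sum>j\<le>k. c j *\<^sub>R x (r j)) = (\<Sum>i\<le>r k. d i *\<^sub>R x i)"
proof -
  define d where "d i = (\<Sum>j\<le>k. if r j = i then c j else 0)" for i
  have "d i \<in> insert 0 (c ` {..k})" for i
  proof (cases "i \<in> r ` {..k}")
    case True
    then obtain j where "j \<le> k" "i = r j" by auto
    then have "d i = (\<Sum>j'\<le>k. if j' = j then c j' else 0)"
      unfolding d_def using strict_mono_eq[OF assms] by (intro sum.cong) auto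
    then show ?thesis using \<open>j \<le> k\<close> by simp
  next
    case False
    then show ?thesis by (auto simp: d_def intro!: sum.neutral)
  qed
  moreover have "(\<Sum>i\<le>r k. d i *\<^sub>R x i) = (\<Sum>j\<le>k. \<Sum>i\<le>r k. if i = r j then c j *\<^sub>R x i else 0)"
    unfolding d_def scaleR_sum_left by (subst sum.swap) (auto intro!: sum.cong)
  then have "(\<Sum>i\<le>r k. d i *\<^sub>R x i) = (\<Sum>j\<le>k. c j *\<^sub>R x (r j))"
    using strict_mono_less_eq[OF assms] by (simp add: sum.delta')
  ultimately show ?thesis using that by metis
qed

lemma partial_sum_norm_le_by_norming_values:
  fixes x :: "nat \<Rightarrow> 'a::real_normed_vector" and c \<alpha> \<theta> :: "nat \<Rightarrow> real"
  assumes norming: "norming_values x V \<alpha>"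
    and approx: "norm ((\<Sum>j\<le>k. c j *\<^sub>R x j) - V) \<le> \<delta>"
    and unit: "norm (\<Sum>j\<le>n. c j *\<^sub>R x j) \<le> 1"
    and "k < n"
    and tails: "\<And>i. k < i \<Longrightarrow> i \<le> n \<Longrightarrow> \<bar>\<Sum>j=i..n. c j\<bar> \<le> lam"
    and first: "\<bar>\<alpha> (Suc k)\<bar> \<le> lam"
    and increments: "\<And>i. k < i \<Longrightarrow> i < n \<Longrightarrow> \<bar>\<alpha> (Suc i) - \<alpha> i\<bar> \<le> \<theta> i"
    and small: "(\<Sum>i=Suc k..<n. \<theta> i) \<le> \<delta>"
  shows "norm (\<Sum>j\<le>k. c j *\<^sub>R x j) \<le> 1 + lam\<^sup>2 + (2 + lam) * \<delta>"
proof -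
  define T where "T = (\<Sum>j=Suc k..n. c j *\<^sub>R x j)"
  define t where "t = (\<Sum>j=Suc k..n. c j)"
  have "{..n} = {..k} \<union> {Suc k..n}" using \<open>k < n\<close> by auto
  then have split: "(\<Sum>j\<le>n. c j *\<^sub>R x j) = (\<Sum>j\<le>k. c j *\<^sub>R x j) + T"
    unfolding T_def by (simp add: sum.union_disjoint)
  have "norm V + (\<Sum>j=Suc k..n. c j * \<alpha> j) \<le> norm (V + T)"
    using norming_valuesD[OF norming, of "{Suc k..n}" 1 c id] by (simp add: T_def)
  also have "\<dots> \<le> 1 + \<delta>"
  proof -
    have "V + T = (\<Sum>j\<le>n. c j *\<^sub>R x j) - ((\<Sum>j\<le>k. c j *\<^sub>R x j) - V)"
      using split by (simp add: algebra_simps)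
    then have "norm (V + T) \<le> norm (\<Sum>j\<le>n. c j *\<^sub>R x j) + norm ((\<Sum>j\<le>k. c j *\<^sub>R x j) - V)"
      by (metis norm_triangle_ineq4)
    then show ?thesis using unit approx by linarith
  qed
  finally have V_le: "norm V \<le> 1 + \<delta> - (\<Sum>j=Suc k..n. c j * \<alpha> j)" by simp
  have "lam \<ge> 0" using first by linarith
  have "(\<Sum>j=Suc k..n. c j * \<alpha> j) = t * \<alpha> (Suc k) + (\<Sum>j=Suc k..n. c j * (\<alpha> j - \<alpha> (Suc k)))"
    unfolding t_def by (simp add: sum_distrib_right sum_distrib_left sum_subtractf algebra_simps)
  moreover have "\<bar>t * \<alpha> (Suc k)\<bar> \<le> lam\<^sup>2"
    unfolding abs_mult power2_eq_square t_def
    using tails[of "Suc k"] first \<open>k < n\<close> by (intro mult_mono) auto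
  moreover have "\<bar>\<Sum>j=Suc k..n. c j * (\<alpha> j - \<alpha> (Suc k))\<bar> \<le> lam * \<delta>"
  proof -
    have "\<bar>\<Sum>j=Suc k..n. c j * (\<alpha> j - \<alpha> (Suc k))\<bar> \<le> lam * (\<Sum>i=Suc k..<n. \<theta> i)"
      using \<open>k < n\<close> by (intro abs_sum_mult_diff_le increments tails) auto
    also have "\<dots> \<le> lam * \<delta>" using small \<open>lam \<ge> 0\<close> by (rule mult_left_mono)
    finally show ?thesis .
  qed
  ultimately have "norm V \<le> 1 + lam\<^sup>2 + (1 + lam) * \<delta>"
    using V_le by (simp add: abs_le_iff algebra_simps)
  moreover have "norm (\<Sum>j\<le>k. c j *\<^sub>R x j) \<le> norm V + \<delta>"
    using norm_triangle_ineq2[of "\<Sum>j\<le>k. c j *\<^sub>R x j" V] approx by simp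
  ultimately show ?thesis by (simp add: algebra_simps)
qed

lemma partial_sum_norm_le_homogeneous:
  fixes x :: "nat \<Rightarrow> 'a::real_normed_vector"
  assumes unit: "\<And>c. norm (\<Sum>j\<le>n. c j *\<^sub>R x j) = 1 \<Longrightarrow> norm (\<Sum>j\<le>k. c j *\<^sub>R x j) \<le> C"
    and zero: "\<And>c. (\<Sum>j\<le>n. c j *\<^sub>R x j) = 0 \<Longrightarrow> (\<Sum>j\<le>k. c j *\<^sub>R x j) = 0"
  shows "norm (\<Sum>j\<le>k. c j *\<^sub>R x j) \<le> C * norm (\<Sum>j\<le>n. c j *\<^sub>R x j)"
proof (cases "(\<Sum>j\<le>n. c j *\<^sub>R x j) = 0")
  case True
  then show ?thesis using zero by simp
next
  case False
  define m where "m = norm (\<Sum>j\<le>n. c j *\<^sub>R x j)"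
  have "m > 0" using False by (simp add: m_def)
  have scale: "(\<Sum>j\<le>q. (c j / m) *\<^sub>R x j) = (1 / m) *\<^sub>R (\<Sum>j\<le>q. c j *\<^sub>R x j)" for q
    by (simp add: scaleR_sum_right)
  have "norm (\<Sum>j\<le>n. (c j / m) *\<^sub>R x j) = 1"
    using \<open>m > 0\<close> unfolding scale by (simp add: m_def)
  then have "norm (\<Sum>j\<le>k. (c j / m) *\<^sub>R x j) \<le> C" by (rule unit)
  then have "norm (\<Sum>j\<le>k. c j *\<^sub>R x j) / m \<le> C"
    using \<open>m > 0\<close> unfolding scale by simp
  then show ?thesis using \<open>m > 0\<close> by (simp add: m_def pos_divide_le_eq mult.commute)
qed

lemma basicI:
  fixes b :: "nat \<Rightarrow> 'a::banach"
  assumes "\<And>c k n. k < n \<Longrightarrow> norm (\<Sum>j\<le>k. c j *\<^sub>R b j) \<le> mu * norm (\<Sum>j\<le>n. c j *\<^sub>R b j)"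
  shows "basic mu b"
  unfolding basic_def
proof (intro allI impI)
  fix c :: "nat \<Rightarrow> real" and k
  assume "summable (\<lambda>j. c j *\<^sub>R b j)"
  then have "(\<lambda>n. mu * norm (\<Sum>j\<le>n. c j *\<^sub>R b j)) \<longlonglongrightarrow> mu * norm (\<Sum>j. c j *\<^sub>R b j)"
    by (intro tendsto_mult_left tendsto_norm summable_LIMSEQ')
  then show "norm (\<Sum>j\<le>k. c j *\<^sub>R b j) \<le> mu * norm (\<Sum>j. c j *\<^sub>R b j)"
    by (rule LIMSEQ_le_const) (use assms in \<open>auto intro: exI[of _ "Suc k"]\<close>)
qed

lemma sum_scaled_half_powers_le:
  fixes \<delta> :: real
  assumes "finite I" and "\<delta> \<ge> 0"
  shows "(\<Sum>i\<in>I. \<delta> * (1 / 2) ^ Suc i) \<le> \<delta>"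
proof -
  have "(\<Sum>i\<in>I. (1 / 2 :: real) ^ Suc i) \<le> 1"
    using sum_le_suminf[OF sums_summable[OF power_half_series] \<open>finite I\<close>]
      sums_unique[OF power_half_series]
    by simp
  then have "\<delta> * (\<Sum>i\<in>I. (1 / 2) ^ Suc i) \<le> \<delta> * 1"
    using \<open>\<delta> \<ge> 0\<close> by (rule mult_left_mono)
  then show ?thesis by (simp add: sum_distrib_left)
qed

lemma triangular_partial_sum_grid_approximation:
  fixes b :: "nat \<Rightarrow> 'a::banach" and r :: "nat \<Rightarrow> nat"
  assumes tri: "triangular lam b" and "strict_mono r"
    and unit: "norm (\<Sum>j\<le>n. c j *\<^sub>R b (r j)) = 1" and "k \<le> n"
    and "\<eta> > 0" and K: "2 * lam \<le> \<eta> * K"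
  obtains V where "V \<in> grid b \<eta> K (r k)"
    and "norm ((\<Sum>j\<le>k. c j *\<^sub>R b (r j)) - V) \<le> (real (r k) + 1) * \<eta> * lam"
proof -
  obtain d where d: "\<And>i. d i \<in> insert 0 (c ` {..k})"
    and S_k: "(\<Sum>j\<le>k. c j *\<^sub>R b (r j)) = (\<Sum>i\<le>r k. d i *\<^sub>R b i)"
    using strict_mono_sum_as_prefix_sum[OF \<open>strict_mono r\<close>, where c = c and k = k and x = b]
    by blast
  have "\<bar>c j\<bar> \<le> 2 * lam" if "j \<le> k" for j
    using triangular_coeff_le[OF triangular_comp_strict_mono[OF tri \<open>strict_mono r\<close>], of j n c]
      that \<open>k \<le> n\<close> unit
    by simp
  then have "\<bar>d i\<bar> \<le> \<eta> * K" if "i \<le> r k" for i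
    using d[of i] K triangular_ge_one[OF tri] by fastforce
  moreover have "norm (b i) \<le> lam" for i using tri by (simp add: triangular_def)
  ultimately show ?thesis
    using grid_approximation[OF \<open>\<eta> > 0\<close>] that unfolding S_k by metis
qed

lemma triangular_partial_sum_norm_le:
  fixes b :: "nat \<Rightarrow> 'a::banach" and r :: "nat \<Rightarrow> nat"
  assumes tri: "triangular lam b" and "strict_mono r" and norming: "norming_values b V \<alpha>"
    and approx: "norm ((\<Sum>j\<le>k. c j *\<^sub>R b (r j)) - V) \<le> \<delta>"
    and unit: "norm (\<Sum>j\<le>n. c j *\<^sub>R b (r j)) = 1" and "k < n"
    and increments: "\<And>i. k < i \<Longrightarrow> i < n \<Longrightarrow> \<bar>\<alpha> (r (Suc i)) - \<alpha> (r i)\<bar> \<le> \<theta> i"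
    and small: "(\<Sum>i=Suc k..<n. \<theta> i) \<le> \<delta>"
  shows "norm (\<Sum>j\<le>k. c j *\<^sub>R b (r j)) \<le> 1 + lam\<^sup>2 + (2 + lam) * \<delta>"
proof -
  have tri_r: "triangular lam (b \<circ> r)" by (rule triangular_comp_strict_mono[OF tri \<open>strict_mono r\<close>])
  have norm_b: "norm (b i) \<le> lam" for i using tri by (simp add: triangular_def)
  have "norm (\<Sum>j\<le>k. c j *\<^sub>R (b \<circ> r) j) \<le> 1 + lam\<^sup>2 + (2 + lam) * \<delta>"
  proof (rule partial_sum_norm_le_by_norming_values[OF norming_values_comp[OF norming] _ _ \<open>k < n\<close>
        _ _ _ small])
    show "norm ((\<Sum>j\<le>k. c j *\<^sub>R (b \<circ> r) j) - V) \<le> \<delta>" "norm (\<Sum>j\<le>n. c j *\<^sub>R (b \<circ> r) j) \<le> 1"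
      using approx unit by simp_all
    show "\<bar>\<Sum>j=i..n. c j\<bar> \<le> lam" if "k < i" "i \<le> n" for i
      using triangular_tail_sum_le[OF tri_r \<open>i \<le> n\<close>, of c] unit by simp
    show "\<bar>(\<alpha> \<circ> r) (Suc k)\<bar> \<le> lam"
      using norming_values_abs_le[OF norming, of "r (Suc k)"] norm_b[of "r (Suc k)"] by simp
    show "\<bar>(\<alpha> \<circ> r) (Suc i) - (\<alpha> \<circ> r) i\<bar> \<le> \<theta> i" if "k < i" "i < n" for i
      using increments[OF that] by simp
  qed
  then show ?thesis by simp
qed

lemma triangular_subsequence_partial_sums_le:
  fixes b :: "nat \<Rightarrow> 'a::banach"
  assumes tri: "triangular lam b" and "\<delta> > 0"
  obtains r :: "nat \<Rightarrow> nat" where "strict_mono r"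
    and "\<And>c k n. norm (\<Sum>j\<le>n. c j *\<^sub>R b (r j)) = 1 \<Longrightarrow> k < n \<Longrightarrow>
      norm (\<Sum>j\<le>k. c j *\<^sub>R b (r j)) \<le> 1 + lam\<^sup>2 + (2 + lam) * \<delta>"
proof -
  have "lam \<ge> 1" by (rule triangular_ge_one[OF tri])
  have "\<forall>v. \<exists>\<alpha>. norming_values b v \<alpha>" using exists_norming_values by blast
  then obtain \<Psi> where \<Psi>: "\<And>v. norming_values b v (\<Psi> v)" by (metis choice)
  define \<eta> where "\<eta> p = \<delta> / ((real p + 1) * lam)" for p
  define K where "K p = \<lceil>2 * lam / \<eta> p\<rceil>" for p
  define \<theta> where "\<theta> i = \<delta> * (1 / 2) ^ Suc i" for i
  \<comment> \<open>Every head ending at index \<open>p\<close> is \<open>\<delta>\<close>-close to a point of the \<open>p\<close>-th grid.\<close>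
  define F where "F p = \<Psi> ` grid b (\<eta> p) (K p) p" for p
  have \<eta>_pos: "\<eta> p > 0" for p using \<open>\<delta> > 0\<close> \<open>lam \<ge> 1\<close> by (simp add: \<eta>_def)
  have F_finite: "finite (F p)" for p by (simp add: F_def finite_grid)
  have F_bounded: "\<bar>\<alpha> i\<bar> \<le> lam" if "\<alpha> \<in> F p" for \<alpha> p i
    using that norming_values_abs_le[OF \<Psi>] tri by (auto simp: F_def triangular_def intro: order_trans)
  have \<theta>_pos: "\<theta> i > 0" for i using \<open>\<delta> > 0\<close> by (simp add: \<theta>_def)
  obtain r where "strict_mono r"
    and incr: "\<And>k i \<alpha>. k < i \<Longrightarrow> \<alpha> \<in> F (r k) \<Longrightarrow> \<bar>\<alpha> (r (Suc i)) - \<alpha> (r i)\<bar> \<le> \<theta> i"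
    using exists_subsequence_small_increments[of F lam \<theta>] F_finite F_bounded \<theta>_pos by blast
  have bound: "norm (\<Sum>j\<le>k. c j *\<^sub>R b (r j)) \<le> 1 + lam\<^sup>2 + (2 + lam) * \<delta>"
    if unit: "norm (\<Sum>j\<le>n. c j *\<^sub>R b (r j)) = 1" and "k < n" for c k n
  proof -
    define p where "p = r k"
    have "2 * lam = \<eta> p * (2 * lam / \<eta> p)" using \<eta>_pos[of p] by simp
    also have "\<dots> \<le> \<eta> p * K p"
      unfolding K_def using \<eta>_pos[of p] by (intro mult_left_mono le_of_int_ceiling) auto
    finally obtain V where "V \<in> grid b (\<eta> p) (K p) p"
      and V_approx: "norm ((\<Sum>j\<le>k. c j *\<^sub>R b (r j)) - V) \<le> (real p + 1) * \<eta> p * lam"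
      using triangular_partial_sum_grid_approximation[OF tri \<open>strict_mono r\<close> unit _ \<eta>_pos] \<open>k < n\<close>
      unfolding p_def by (metis less_imp_le)
    then have "\<Psi> V \<in> F (r k)" by (simp add: F_def p_def)
    moreover have "(real p + 1) * \<eta> p * lam = \<delta>" using \<open>lam \<ge> 1\<close> by (simp add: \<eta>_def)
    moreover have "(\<Sum>i=Suc k..<n. \<theta> i) \<le> \<delta>"
      unfolding \<theta>_def using \<open>\<delta> > 0\<close> by (intro sum_scaled_half_powers_le) auto
    ultimately show ?thesis
      using triangular_partial_sum_norm_le[OF tri \<open>strict_mono r\<close> \<Psi> _ unit \<open>k < n\<close> incr] V_approx
      by simp
  qed
  show ?thesis by (rule that[OF \<open>strict_mono r\<close> bound])
qed

theorem triangular_basic_subsequence: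
  fixes b :: "nat \<Rightarrow> 'a::banach"
  assumes tri: "triangular lam b" and "eps > 0"
  obtains r where "strict_mono r" and "basic (lam\<^sup>2 + 1 + eps) (b \<circ> r)"
proof -
  have "lam \<ge> 1" by (rule triangular_ge_one[OF tri])
  define \<delta> where "\<delta> = eps / (2 + lam)"
  have "\<delta> > 0" using \<open>eps > 0\<close> \<open>lam \<ge> 1\<close> by (simp add: \<delta>_def)
  then obtain r :: "nat \<Rightarrow> nat" where "strict_mono r"
    and unit: "\<And>c k n. norm (\<Sum>j\<le>n. c j *\<^sub>R b (r j)) = 1 \<Longrightarrow> k < n \<Longrightarrow>
      norm (\<Sum>j\<le>k. c j *\<^sub>R b (r j)) \<le> 1 + lam\<^sup>2 + (2 + lam) * \<delta>"
    using triangular_subsequence_partial_sums_le[OF tri] by blast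
  have \<delta>_eq: "1 + lam\<^sup>2 + (2 + lam) * \<delta> = lam\<^sup>2 + 1 + eps" using \<open>lam \<ge> 1\<close> by (simp add: \<delta>_def)
  have tri_r: "triangular lam (b \<circ> r)" by (rule triangular_comp_strict_mono[OF tri \<open>strict_mono r\<close>])
  have "norm (\<Sum>j\<le>k. c j *\<^sub>R (b \<circ> r) j) \<le> (lam\<^sup>2 + 1 + eps) * norm (\<Sum>j\<le>n. c j *\<^sub>R (b \<circ> r) j)"
    if "k < n" for c k n
  proof (rule partial_sum_norm_le_homogeneous)
    fix c :: "nat \<Rightarrow> real"
    assume "norm (\<Sum>j\<le>n. c j *\<^sub>R (b \<circ> r) j) = 1"
    then show "norm (\<Sum>j\<le>k. c j *\<^sub>R (b \<circ> r) j) \<le> lam\<^sup>2 + 1 + eps"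
      using unit[of c n k] \<open>k < n\<close> \<delta>_eq by simp
  next
    fix c :: "nat \<Rightarrow> real"
    assume zero: "(\<Sum>j\<le>n. c j *\<^sub>R (b \<circ> r) j) = 0"
    have "c j = 0" if "j \<le> k" for j
      using triangular_coeff_le[OF tri_r, of j n c] that \<open>k < n\<close> zero by simp
    then show "(\<Sum>j\<le>k. c j *\<^sub>R (b \<circ> r) j) = 0" by simp
  qed
  then have "basic (lam\<^sup>2 + 1 + eps) (b \<circ> r)" by (rule basicI)
  with \<open>strict_mono r\<close> show ?thesis by (rule that)
qed

theorem corollary16:
  fixes b :: "nat \<Rightarrow> 'a::banach" and lam eps :: real
  assumes "lam \<ge> 1" and "triangular lam b" and "eps > 0"
  shows "\<exists>r. strict_mono r \<and> wide_s ((lam\<^sup>2 + 1) / 2 + eps) (b \<circ> r)"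
proof -
  have "2 * eps > 0" using \<open>eps > 0\<close> by simp
  then obtain r where "strict_mono r" and basic: "basic (lam\<^sup>2 + 1 + 2 * eps) (b \<circ> r)"
    by (rule triangular_basic_subsequence[OF assms(2)])
  have tri_r: "triangular lam (b \<circ> r)" by (rule triangular_comp_strict_mono[OF assms(2) \<open>strict_mono r\<close>])
  have "2 * lam \<le> lam\<^sup>2 + 1" using sum_squares_bound[of lam 1] by (simp add: power2_eq_square)
  then have lam_le: "lam \<le> (lam\<^sup>2 + 1) / 2 + eps" using \<open>eps > 0\<close> by (simp add: field_simps)
  have "wide_s ((lam\<^sup>2 + 1) / 2 + eps) (b \<circ> r)"
    unfolding wide_s_def
  proof (intro conjI allI impI)
    have "2 * ((lam\<^sup>2 + 1) / 2 + eps) = lam\<^sup>2 + 1 + 2 * eps" by simp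
    then show "basic (2 * ((lam\<^sup>2 + 1) / 2 + eps)) (b \<circ> r)" using basic by (simp only:)
    show "norm ((b \<circ> r) j) \<le> (lam\<^sup>2 + 1) / 2 + eps" for j
      using tri_r lam_le unfolding triangular_def by (meson order_trans)
    show "\<bar>\<Sum>j=k..n. c j\<bar> \<le> ((lam\<^sup>2 + 1) / 2 + eps) * norm (\<Sum>j\<le>n. c j *\<^sub>R (b \<circ> r) j)"
      if "k \<le> n" for c :: "nat \<Rightarrow> real" and k n
      using triangular_tail_sum_le[OF tri_r that, of c] mult_right_mono[OF lam_le norm_ge_zero]
      by (rule order_trans)
  qed
  with \<open>strict_mono r\<close> show ?thesis by blast
qed

end
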